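(* The set $\Sigma=\{m\in(0,\infty):\partial_\xi^3\theta(0;m)=0\}$ is discrete. Writing $\Sigma=\{m_k\}_{k\ge1}$ (in increasing order), there exist $K>0$ and $k_0\in\mathbb{Z}$ such that $m_k=(k+k_0+\tfrac12)\pi+O(k^{-1})$ for all $k\ge K$. Moreover, $$m_k^3\,\partial_\xi^5\theta(0;m_k)=(-1)^{k+k_0+1}\cdot 15+O(k^{-2})\qquad(k\to\infty),$$ so in particular $\partial_\xi^5\theta(0;m_k)\neq 0$ for all sufficiently large $k$.
   Context: $\omega(\xi;m)=\sqrt{m^2+\xi^2}$ and $\theta(\xi;m)=\arctan\!\Big(\frac{\xi\sin(\omega(\xi;m))}{\sqrt{m^2+\xi^2\cos^2(\omega(\xi;m))}}\Big)$ for $m>0$, $\xi\in\mathbb{R}$. *)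

theory Defs
  imports "HOL-Analysis.Analysis"
begin

definition omega :: "real \<Rightarrow> real \<Rightarrow> real" where
  "omega \<xi> m = sqrt (m^2 + \<xi>^2)"

definition theta :: "real \<Rightarrow> real \<Rightarrow> real" where
  "theta \<xi> m = arctan (\<xi> * sin (omega \<xi> m) / sqrt (m^2 + \<xi>^2 * (cos (omega \<xi> m))^2))"

definition dtheta0 :: "nat \<Rightarrow> real \<Rightarrow> real" where
  "dtheta0 n m = (deriv ^^ n) (\<lambda>\<xi>. theta \<xi> m) 0"

definition Sigma_set :: "real set" where
  "Sigma_set = {m. 0 < m \<and> dtheta0 3 m = 0}"

end

theory Submission
  imports Defs "HOL-Complex_Analysis.Complex_Analysis"
begin

text \<open>
  Near \<xi> = 0 the function \<theta>(\<xi>;m) is the restriction of a holomorphic function, the composition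
  of the power series of sqrt(1 + u), sin, cos, (1 + u) powr (-1/2) and arctan, so its derivatives
  at 0 are read off from Taylor coefficients. This gives m^3 \<theta>'''(0;m) = g(m) with
  g(m) = 3 m cos m - sin m (2 + cos^2 m), and a closed form for \<theta>^(5)(0;m).
  Since g'(m) = 3 sin m (sin m cos m - m) and sin m cos m < m, the function g is strictly monotone
  on each interval [k\<pi>, (k+1)\<pi>]; it changes sign there for k \<ge> 1 and is negative on (0, \<pi>],
  so Sigma consists of exactly one zero m_k in each (k\<pi>, (k+1)\<pi>), k \<ge> 1.
  The equation g(m_k) = 0 forces |cos m_k| \<le> 1/m_k, hence m_k = (k + 1/2)\<pi> + O(1/k); in the
  closed form of m_k^3 \<theta>^(5)(0;m_k) everything except -15 sin m_k is then O(1/k^2), and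
  -15 sin m_k differs from (-1)^(k+1) 15 by at most 15 cos^2 m_k.
\<close>

section \<open>Low-order coefficients of formal power series\<close>

lemma fps_mult_nth_upto5:
  fixes a b :: "'a::comm_ring_1 fps"
  shows "fps_nth (a*b) 1 = fps_nth a 0*fps_nth b 1 + fps_nth a 1*fps_nth b 0"
    "fps_nth (a*b) 2 = fps_nth a 0*fps_nth b 2 + fps_nth a 1*fps_nth b 1 + fps_nth a 2*fps_nth b 0"
    "fps_nth (a*b) 3 = fps_nth a 0*fps_nth b 3 + fps_nth a 1*fps_nth b 2 + fps_nth a 2*fps_nth b 1 + fps_nth a 3*fps_nth b 0"
    "fps_nth (a*b) 4 = fps_nth a 0*fps_nth b 4 + fps_nth a 1*fps_nth b 3 + fps_nth a 2*fps_nth b 2 + fps_nth a 3*fps_nth b 1 + fps_nth a 4*fps_nth b 0"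
    "fps_nth (a*b) 5 = fps_nth a 0*fps_nth b 5 + fps_nth a 1*fps_nth b 4 + fps_nth a 2*fps_nth b 3 + fps_nth a 3*fps_nth b 2 + fps_nth a 4*fps_nth b 1 + fps_nth a 5*fps_nth b 0"
  by (simp_all add: fps_mult_nth eval_nat_numeral atLeast0AtMost)

lemma fps_power2_nth_upto5:
  fixes b :: "'a::comm_ring_1 fps" assumes "fps_nth b 0 = 0"
  shows "fps_nth (b^2) 0 = 0" "fps_nth (b^2) 1 = 0" "fps_nth (b^2) 2 = (fps_nth b 1)^2"
    "fps_nth (b^2) 3 = 2*fps_nth b 1*fps_nth b 2"
    "fps_nth (b^2) 4 = 2*fps_nth b 1*fps_nth b 3 + (fps_nth b 2)^2"
    "fps_nth (b^2) 5 = 2*fps_nth b 1*fps_nth b 4 + 2*fps_nth b 2*fps_nth b 3"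
  unfolding power2_eq_square[of b]
  by (simp_all only: fps_mult_nth_upto5 assms fps_mult_nth_0 mult_zero_left mult_zero_right
      add_0_left add_0_right) (simp_all add: eval_nat_numeral algebra_simps)

lemma fps_power3_nth_upto5:
  fixes b :: "'a::comm_ring_1 fps" assumes "fps_nth b 0 = 0"
  shows "fps_nth (b^3) 0 = 0" "fps_nth (b^3) 1 = 0" "fps_nth (b^3) 2 = 0"
    "fps_nth (b^3) 3 = (fps_nth b 1)^3"
    "fps_nth (b^3) 4 = 3*(fps_nth b 1)^2*fps_nth b 2"
    "fps_nth (b^3) 5 = 3*(fps_nth b 1)^2*fps_nth b 3 + 3*fps_nth b 1*(fps_nth b 2)^2"
  unfolding power3_eq_cube mult.assoc power2_eq_square[of b, symmetric]
  by (simp_all only: fps_mult_nth_upto5 fps_power2_nth_upto5[OF assms] assms fps_mult_nth_0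
      mult_zero_left mult_zero_right add_0_left add_0_right) (simp_all add: eval_nat_numeral algebra_simps)

lemma fps_power4_nth_upto5:
  fixes b :: "'a::comm_ring_1 fps" assumes "fps_nth b 0 = 0"
  shows "fps_nth (b^4) 0 = 0" "fps_nth (b^4) 1 = 0" "fps_nth (b^4) 2 = 0" "fps_nth (b^4) 3 = 0"
    "fps_nth (b^4) 4 = (fps_nth b 1)^4" "fps_nth (b^4) 5 = 4*(fps_nth b 1)^3*fps_nth b 2"
proof -
  have "b^4 = b * b^3" by (simp add: eval_nat_numeral)
  then show "fps_nth (b^4) 0 = 0" "fps_nth (b^4) 1 = 0" "fps_nth (b^4) 2 = 0" "fps_nth (b^4) 3 = 0"
    "fps_nth (b^4) 4 = (fps_nth b 1)^4" "fps_nth (b^4) 5 = 4*(fps_nth b 1)^3*fps_nth b 2"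
    by (simp_all only: fps_mult_nth_upto5 fps_power3_nth_upto5[OF assms] assms fps_mult_nth_0
        mult_zero_left mult_zero_right add_0_left add_0_right) (simp_all add: eval_nat_numeral algebra_simps)
qed

lemma fps_power5_nth_upto5:
  fixes b :: "'a::comm_ring_1 fps" assumes "fps_nth b 0 = 0"
  shows "fps_nth (b^5) 0 = 0" "fps_nth (b^5) 1 = 0" "fps_nth (b^5) 2 = 0" "fps_nth (b^5) 3 = 0"
    "fps_nth (b^5) 4 = 0" "fps_nth (b^5) 5 = (fps_nth b 1)^5"
proof -
  have "b^5 = b * b^4" by (simp add: eval_nat_numeral)
  then show "fps_nth (b^5) 0 = 0" "fps_nth (b^5) 1 = 0" "fps_nth (b^5) 2 = 0" "fps_nth (b^5) 3 = 0"
    "fps_nth (b^5) 4 = 0" "fps_nth (b^5) 5 = (fps_nth b 1)^5"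
    by (simp_all only: fps_mult_nth_upto5 fps_power4_nth_upto5[OF assms] assms fps_mult_nth_0
        mult_zero_left mult_zero_right add_0_left add_0_right) (simp_all add: eval_nat_numeral algebra_simps)
qed

lemma fps_compose_nth_upto5:
  fixes a b :: "'a::comm_ring_1 fps"
  assumes "fps_nth b 0 = 0"
  shows "fps_nth (a oo b) 1 = fps_nth a 1*fps_nth b 1"
    "fps_nth (a oo b) 2 = fps_nth a 1*fps_nth b 2 + fps_nth a 2*(fps_nth b 1)^2"
    "fps_nth (a oo b) 3 = fps_nth a 1*fps_nth b 3 + 2*fps_nth a 2*fps_nth b 1*fps_nth b 2
      + fps_nth a 3*(fps_nth b 1)^3"
    "fps_nth (a oo b) 4 = fps_nth a 1*fps_nth b 4 + fps_nth a 2*(2*fps_nth b 1*fps_nth b 3 + (fps_nth b 2)^2)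
      + 3*fps_nth a 3*(fps_nth b 1)^2*fps_nth b 2 + fps_nth a 4*(fps_nth b 1)^4"
    "fps_nth (a oo b) 5 = fps_nth a 1*fps_nth b 5 + fps_nth a 2*(2*fps_nth b 1*fps_nth b 4 + 2*fps_nth b 2*fps_nth b 3)
      + fps_nth a 3*(3*(fps_nth b 1)^2*fps_nth b 3 + 3*fps_nth b 1*(fps_nth b 2)^2)
      + 4*fps_nth a 4*(fps_nth b 1)^3*fps_nth b 2 + fps_nth a 5*(fps_nth b 1)^5"
proof -
  have sums: "(\<Sum>i\<in>{0..1::nat}. f i) = f 0 + f 1"
    "(\<Sum>i\<in>{0..2::nat}. f i) = f 0 + f 1 + f 2"
    "(\<Sum>i\<in>{0..3::nat}. f i) = f 0 + f 1 + f 2 + f 3"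
    "(\<Sum>i\<in>{0..4::nat}. f i) = f 0 + f 1 + f 2 + f 3 + f 4"
    "(\<Sum>i\<in>{0..5::nat}. f i) = f 0 + f 1 + f 2 + f 3 + f 4 + f 5" for f :: "nat \<Rightarrow> 'a"
    by (simp_all add: eval_nat_numeral atLeast0AtMost)
  show "fps_nth (a oo b) 1 = fps_nth a 1*fps_nth b 1"
    "fps_nth (a oo b) 2 = fps_nth a 1*fps_nth b 2 + fps_nth a 2*(fps_nth b 1)^2"
    "fps_nth (a oo b) 3 = fps_nth a 1*fps_nth b 3 + 2*fps_nth a 2*fps_nth b 1*fps_nth b 2
      + fps_nth a 3*(fps_nth b 1)^3"
    "fps_nth (a oo b) 4 = fps_nth a 1*fps_nth b 4 + fps_nth a 2*(2*fps_nth b 1*fps_nth b 3 + (fps_nth b 2)^2)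
      + 3*fps_nth a 3*(fps_nth b 1)^2*fps_nth b 2 + fps_nth a 4*(fps_nth b 1)^4"
    "fps_nth (a oo b) 5 = fps_nth a 1*fps_nth b 5 + fps_nth a 2*(2*fps_nth b 1*fps_nth b 4 + 2*fps_nth b 2*fps_nth b 3)
      + fps_nth a 3*(3*(fps_nth b 1)^2*fps_nth b 3 + 3*fps_nth b 1*(fps_nth b 2)^2)
      + 4*fps_nth a 4*(fps_nth b 1)^3*fps_nth b 2 + fps_nth a 5*(fps_nth b 1)^5"
    unfolding fps_compose_nth sums
    by (simp_all only: power_0 power_one_right fps_one_nth fps_power2_nth_upto5[OF assms]
        fps_power3_nth_upto5[OF assms] fps_power4_nth_upto5[OF assms] fps_power5_nth_upto5[OF assms]
        assms fps_mult_nth_0 mult_zero_left mult_zero_right add_0_left add_0_right)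
      (simp_all add: algebra_simps)
qed

section \<open>Taylor coefficients of \<open>\<theta>\<close> at \<open>\<xi> = 0\<close>\<close>

definition inv_sq :: "real \<Rightarrow> complex" where
  "inv_sq m = inverse ((complex_of_real m)^2)"

definition fps_ratio_sq :: "real \<Rightarrow> complex fps" where
  "fps_ratio_sq m = fps_const (inv_sq m) * fps_X^2"

definition fps_omega :: "real \<Rightarrow> complex fps" where
  "fps_omega m = fps_const (complex_of_real m) * (fps_binomial (1/2) oo fps_ratio_sq m)"

definition fps_omega_shift :: "real \<Rightarrow> complex fps" where
  "fps_omega_shift m = fps_omega m - fps_const (complex_of_real m)"

definition fps_cos_shift :: "real \<Rightarrow> complex fps" where
  "fps_cos_shift m = fps_cos 1 oo fps_omega_shift m"

definition fps_sin_shift :: "real \<Rightarrow> complex fps" where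
  "fps_sin_shift m = fps_sin 1 oo fps_omega_shift m"

text \<open>Composition of power series needs an inner series without constant term, so \<open>sin \<omega>\<close> and
  \<open>cos \<omega>\<close> are expanded around \<open>\<omega> = m\<close> by the addition formulas.\<close>

definition fps_sin_omega :: "real \<Rightarrow> complex fps" where
  "fps_sin_omega m = fps_const (sin (complex_of_real m)) * fps_cos_shift m
     + fps_const (cos (complex_of_real m)) * fps_sin_shift m"

definition fps_cos_omega :: "real \<Rightarrow> complex fps" where
  "fps_cos_omega m = fps_const (cos (complex_of_real m)) * fps_cos_shift m
     - fps_const (sin (complex_of_real m)) * fps_sin_shift m"

definition fps_radicand :: "real \<Rightarrow> complex fps" where
  "fps_radicand m = fps_const (inv_sq m) * (fps_X^2 * (fps_cos_omega m * fps_cos_omega m))"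

definition fps_inv_sqrt :: "real \<Rightarrow> complex fps" where
  "fps_inv_sqrt m = fps_binomial (-1/2) oo fps_radicand m"

definition fps_arctan_arg :: "real \<Rightarrow> complex fps" where
  "fps_arctan_arg m = fps_const (inverse (complex_of_real m)) * (fps_X * (fps_sin_omega m * fps_inv_sqrt m))"

definition fps_arctan :: "complex fps" where
  "fps_arctan = Abs_fps (\<lambda>n. if odd n then -\<i>*\<i>^n / of_nat n else 0)"

definition fps_theta :: "real \<Rightarrow> complex fps" where
  "fps_theta m = fps_arctan oo fps_arctan_arg m"

lemmas fps_compose_mult_nth_upto5 =
  fps_compose_nth_upto5 fps_compose_nth_upto5[unfolded One_nat_def]
  fps_mult_nth_upto5 fps_mult_nth_upto5[unfolded One_nat_def]

lemma fps_ratio_sq_nth: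
  "fps_nth (fps_ratio_sq m) 0 = 0" "fps_nth (fps_ratio_sq m) 1 = 0" "fps_nth (fps_ratio_sq m) 2 = inv_sq m"
  "fps_nth (fps_ratio_sq m) 3 = 0" "fps_nth (fps_ratio_sq m) 4 = 0" "fps_nth (fps_ratio_sq m) 5 = 0"
  by (simp_all add: fps_ratio_sq_def fps_X_power_nth)

lemma gbinomial_half_upto2:
  "((1/2::complex) gchoose 1) = 1/2" "((1/2::complex) gchoose 2) = -1/8"
  "((-(1/2)::complex) gchoose 1) = -1/2" "((-(1/2)::complex) gchoose 2) = 3/8"
  by (simp_all add: gbinomial_Suc eval_nat_numeral)

lemma fps_omega_nth:
  "fps_nth (fps_omega m) 0 = of_real m" "fps_nth (fps_omega m) 1 = 0"
  "fps_nth (fps_omega m) 2 = of_real m * inv_sq m / 2" "fps_nth (fps_omega m) 3 = 0"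
  "fps_nth (fps_omega m) 4 = - of_real m * (inv_sq m)^2 / 8" "fps_nth (fps_omega m) 5 = 0"
  by (simp_all add: fps_omega_def fps_compose_mult_nth_upto5 fps_ratio_sq_nth
      fps_ratio_sq_nth[unfolded One_nat_def] gbinomial_half_upto2)

lemma fps_omega_shift_nth:
  "fps_nth (fps_omega_shift m) 0 = 0" "fps_nth (fps_omega_shift m) 1 = 0"
  "fps_nth (fps_omega_shift m) 2 = of_real m * inv_sq m / 2" "fps_nth (fps_omega_shift m) 3 = 0"
  "fps_nth (fps_omega_shift m) 4 = - of_real m * (inv_sq m)^2 / 8" "fps_nth (fps_omega_shift m) 5 = 0"
  by (simp_all add: fps_omega_shift_def fps_omega_nth fps_omega_nth[unfolded One_nat_def])

lemma fps_sin_cos_nth_upto5: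
  "fps_nth (fps_sin (1::complex)) 2 = 0" "fps_nth (fps_sin (1::complex)) 3 = -1/6"
  "fps_nth (fps_sin (1::complex)) 4 = 0" "fps_nth (fps_sin (1::complex)) 5 = 1/120"
  "fps_nth (fps_cos (1::complex)) 2 = -1/2" "fps_nth (fps_cos (1::complex)) 3 = 0"
  "fps_nth (fps_cos (1::complex)) 4 = 1/24" "fps_nth (fps_cos (1::complex)) 5 = 0"
  by (simp_all add: fps_sin_def fps_cos_def fact_numeral)

lemma fps_cos_shift_nth:
  "fps_nth (fps_cos_shift m) 0 = 1" "fps_nth (fps_cos_shift m) 1 = 0" "fps_nth (fps_cos_shift m) 2 = 0"
  "fps_nth (fps_cos_shift m) 3 = 0" "fps_nth (fps_cos_shift m) 4 = - ((of_real m * inv_sq m)^2) / 8"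
  "fps_nth (fps_cos_shift m) 5 = 0"
  by (simp_all add: fps_cos_shift_def fps_compose_mult_nth_upto5 fps_omega_shift_nth
      fps_omega_shift_nth[unfolded One_nat_def] fps_sin_cos_nth_upto5 power2_eq_square)

lemma fps_sin_shift_nth:
  "fps_nth (fps_sin_shift m) 0 = 0" "fps_nth (fps_sin_shift m) 1 = 0"
  "fps_nth (fps_sin_shift m) 2 = of_real m * inv_sq m / 2" "fps_nth (fps_sin_shift m) 3 = 0"
  "fps_nth (fps_sin_shift m) 4 = - of_real m * (inv_sq m)^2 / 8" "fps_nth (fps_sin_shift m) 5 = 0"
  by (simp_all add: fps_sin_shift_def fps_compose_mult_nth_upto5 fps_omega_shift_nth
      fps_omega_shift_nth[unfolded One_nat_def] fps_sin_cos_nth_upto5)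

lemmas fps_shift_nth =
  fps_cos_shift_nth fps_cos_shift_nth[unfolded One_nat_def]
  fps_sin_shift_nth fps_sin_shift_nth[unfolded One_nat_def]

lemma fps_sin_omega_nth:
  "fps_nth (fps_sin_omega m) 0 = sin (of_real m)" "fps_nth (fps_sin_omega m) 1 = 0"
  "fps_nth (fps_sin_omega m) 2 = cos (of_real m) * (of_real m * inv_sq m / 2)"
  "fps_nth (fps_sin_omega m) 3 = 0"
  "fps_nth (fps_sin_omega m) 4 = sin (of_real m) * (- ((of_real m * inv_sq m)^2) / 8)
     + cos (of_real m) * (- of_real m * (inv_sq m)^2 / 8)"
  "fps_nth (fps_sin_omega m) 5 = 0"
  by (simp_all add: fps_sin_omega_def fps_shift_nth)

lemma fps_cos_omega_nth:
  "fps_nth (fps_cos_omega m) 0 = cos (of_real m)" "fps_nth (fps_cos_omega m) 1 = 0"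
  "fps_nth (fps_cos_omega m) 2 = - (sin (of_real m) * (of_real m * inv_sq m / 2))"
  "fps_nth (fps_cos_omega m) 3 = 0" "fps_nth (fps_cos_omega m) 5 = 0"
  by (simp_all add: fps_cos_omega_def fps_shift_nth)

lemma fps_radicand_nth:
  "fps_nth (fps_radicand m) 0 = 0" "fps_nth (fps_radicand m) 1 = 0"
  "fps_nth (fps_radicand m) 2 = inv_sq m * (fps_nth (fps_cos_omega m) 0)^2"
  "fps_nth (fps_radicand m) 3 = 0"
  "fps_nth (fps_radicand m) 4 = inv_sq m * (2 * fps_nth (fps_cos_omega m) 0 * fps_nth (fps_cos_omega m) 2)"
  "fps_nth (fps_radicand m) 5 = 0"
  by (simp_all add: fps_radicand_def fps_mult_nth_upto5 fps_mult_nth_upto5[unfolded One_nat_def]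
      fps_cos_omega_nth fps_cos_omega_nth[unfolded One_nat_def] fps_X_power_nth power2_eq_square)

lemma fps_inv_sqrt_nth:
  "fps_nth (fps_inv_sqrt m) 0 = 1" "fps_nth (fps_inv_sqrt m) 1 = 0"
  "fps_nth (fps_inv_sqrt m) 2 = -1/2 * fps_nth (fps_radicand m) 2" "fps_nth (fps_inv_sqrt m) 3 = 0"
  "fps_nth (fps_inv_sqrt m) 4 = -1/2 * fps_nth (fps_radicand m) 4 + 3/8 * (fps_nth (fps_radicand m) 2)^2"
  "fps_nth (fps_inv_sqrt m) 5 = 0"
  by (simp_all add: fps_inv_sqrt_def fps_compose_mult_nth_upto5 gbinomial_half_upto2
      fps_radicand_nth(1,2,4,6) fps_radicand_nth(2)[unfolded One_nat_def])

lemma fps_arctan_arg_nth: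
  "fps_nth (fps_arctan_arg m) 0 = 0"
  "fps_nth (fps_arctan_arg m) 1 = inverse (of_real m) * fps_nth (fps_sin_omega m) 0"
  "fps_nth (fps_arctan_arg m) 3 = inverse (of_real m)
     * (fps_nth (fps_sin_omega m) 0 * fps_nth (fps_inv_sqrt m) 2 + fps_nth (fps_sin_omega m) 2)"
  "fps_nth (fps_arctan_arg m) 5 = inverse (of_real m)
     * (fps_nth (fps_sin_omega m) 0 * fps_nth (fps_inv_sqrt m) 4
        + fps_nth (fps_sin_omega m) 2 * fps_nth (fps_inv_sqrt m) 2 + fps_nth (fps_sin_omega m) 4)"
  "fps_nth (fps_arctan_arg m) 2 = 0" "fps_nth (fps_arctan_arg m) 4 = 0"
  by (simp_all add: fps_arctan_arg_def fps_mult_nth_upto5 fps_mult_nth_upto5[unfolded One_nat_def]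
      fps_sin_omega_nth fps_sin_omega_nth[unfolded One_nat_def] fps_inv_sqrt_nth
      fps_inv_sqrt_nth[unfolded One_nat_def] fps_X_nth)

lemma fps_arctan_nth_upto5:
  "fps_nth fps_arctan 1 = 1" "fps_nth fps_arctan 2 = 0" "fps_nth fps_arctan 3 = -1/3"
  "fps_nth fps_arctan 4 = 0" "fps_nth fps_arctan 5 = 1/5"
proof -
  have "\<i>^3 = -\<i>" "\<i>^5 = \<i>" by (simp_all add: eval_nat_numeral)
  then show "fps_nth fps_arctan 1 = 1" "fps_nth fps_arctan 2 = 0" "fps_nth fps_arctan 3 = -1/3"
    "fps_nth fps_arctan 4 = 0" "fps_nth fps_arctan 5 = 1/5"
    by (simp_all add: fps_arctan_def)
qed

lemma fps_theta_nth_3_5: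
  "fps_nth (fps_theta m) 3 = fps_nth (fps_arctan_arg m) 3 - (fps_nth (fps_arctan_arg m) 1)^3 / 3"
  "fps_nth (fps_theta m) 5 = fps_nth (fps_arctan_arg m) 5
     - (fps_nth (fps_arctan_arg m) 1)^2 * fps_nth (fps_arctan_arg m) 3 + (fps_nth (fps_arctan_arg m) 1)^5 / 5"
  by (simp_all add: fps_theta_def fps_compose_mult_nth_upto5 fps_arctan_arg_nth fps_arctan_nth_upto5
      fps_arctan_nth_upto5[unfolded One_nat_def] fps_arctan_arg_nth(2)[unfolded One_nat_def])

definition dtheta3_closed :: "real \<Rightarrow> real" where
  "dtheta3_closed m = 3 * cos m / m^2 - 3 * sin m * (cos m)^2 / m^3 - 2 * (sin m)^3 / m^3"

definition dtheta5_closed :: "real \<Rightarrow> real" where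
  "dtheta5_closed m = -15 * cos m / m^4 - 30 * (cos m)^3 / m^4 - 15 * sin m / m^3
     + 45 * sin m * (cos m)^4 / m^5 + 60 * (sin m)^3 * (cos m)^2 / m^5 + 24 * (sin m)^5 / m^5"

lemmas fps_theta_coeff_simps =
  fps_theta_nth_3_5 fps_arctan_arg_nth fps_arctan_arg_nth[unfolded One_nat_def] fps_inv_sqrt_nth
  fps_radicand_nth fps_sin_omega_nth fps_cos_omega_nth inv_sq_def
  sin_of_real[symmetric] cos_of_real[symmetric] fact_numeral

lemma fps_theta_nth_3:
  assumes "m \<noteq> 0" shows "fact 3 * fps_nth (fps_theta m) 3 = of_real (dtheta3_closed m)"
  using assms
  apply (simp add: fps_theta_coeff_simps dtheta3_closed_def field_simps)
  apply (thin_tac _)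
  by algebra

lemma fps_theta_nth_5:
  assumes "m \<noteq> 0" shows "fact 5 * fps_nth (fps_theta m) 5 = of_real (dtheta5_closed m)"
  using assms
  apply (simp add: fps_theta_coeff_simps dtheta5_closed_def field_simps)
  apply (thin_tac _)
  by algebra

definition omega_c :: "real \<Rightarrow> complex \<Rightarrow> complex" where
  "omega_c m z = complex_of_real m * (1 + inv_sq m * z^2) powr (1/2)"

definition omega_shift_c :: "real \<Rightarrow> complex \<Rightarrow> complex" where
  "omega_shift_c m z = omega_c m z - complex_of_real m"

definition sin_omega_c :: "real \<Rightarrow> complex \<Rightarrow> complex" where
  "sin_omega_c m z = sin (complex_of_real m) * cos (omega_shift_c m z)
     + cos (complex_of_real m) * sin (omega_shift_c m z)"

definition cos_omega_c :: "real \<Rightarrow> complex \<Rightarrow> complex" where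
  "cos_omega_c m z = cos (complex_of_real m) * cos (omega_shift_c m z)
     - sin (complex_of_real m) * sin (omega_shift_c m z)"

definition radicand_c :: "real \<Rightarrow> complex \<Rightarrow> complex" where
  "radicand_c m z = inv_sq m * (z^2 * (cos_omega_c m z * cos_omega_c m z))"

definition inv_sqrt_c :: "real \<Rightarrow> complex \<Rightarrow> complex" where
  "inv_sqrt_c m z = (1 + radicand_c m z) powr (-1/2)"

definition theta_c :: "real \<Rightarrow> complex \<Rightarrow> complex" where
  "theta_c m z = Arctan (inverse (complex_of_real m) * (z * (sin_omega_c m z * inv_sqrt_c m z)))"

lemma has_fps_expansion_omega_c: "omega_c m has_fps_expansion fps_omega m"
proof -
  have ratio: "(\<lambda>z. inv_sq m * z^2) has_fps_expansion fps_ratio_sq m"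
    unfolding fps_ratio_sq_def by (intro fps_expansion_intros)
  have "((\<lambda>x. (1+x) powr (1/2)) \<circ> (\<lambda>z. inv_sq m * z^2))
      has_fps_expansion (fps_binomial (1/2) oo fps_ratio_sq m)"
    by (intro has_fps_expansion_compose ratio has_fps_expansion_binomial_complex) (simp add: fps_ratio_sq_nth)
  from has_fps_expansion_cmult_left[OF this, of "complex_of_real m"]
  show ?thesis unfolding fps_omega_def by (simp add: o_def omega_c_def[abs_def])
qed

lemma has_fps_expansion_omega_shift_c: "omega_shift_c m has_fps_expansion fps_omega_shift m"
  using has_fps_expansion_diff[OF has_fps_expansion_omega_c has_fps_expansion_const[of "complex_of_real m"]]
  unfolding fps_omega_shift_def by (simp add: omega_shift_c_def[abs_def])

lemma has_fps_expansion_cos_omega_shift_c: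
  "(\<lambda>z. cos (omega_shift_c m z)) has_fps_expansion fps_cos_shift m"
proof -
  have "(cos \<circ> omega_shift_c m) has_fps_expansion fps_cos_shift m"
    unfolding fps_cos_shift_def
    by (intro has_fps_expansion_compose has_fps_expansion_omega_shift_c has_fps_expansion_cos')
      (simp add: fps_omega_shift_nth)
  then show ?thesis by (simp add: o_def)
qed

lemma has_fps_expansion_sin_omega_shift_c:
  "(\<lambda>z. sin (omega_shift_c m z)) has_fps_expansion fps_sin_shift m"
proof -
  have "(sin \<circ> omega_shift_c m) has_fps_expansion fps_sin_shift m"
    unfolding fps_sin_shift_def
    by (intro has_fps_expansion_compose has_fps_expansion_omega_shift_c has_fps_expansion_sin')
      (simp add: fps_omega_shift_nth)
  then show ?thesis by (simp add: o_def)
qed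

lemma has_fps_expansion_sin_omega_c: "sin_omega_c m has_fps_expansion fps_sin_omega m"
  unfolding fps_sin_omega_def sin_omega_c_def[abs_def]
  by (intro fps_expansion_intros has_fps_expansion_cos_omega_shift_c has_fps_expansion_sin_omega_shift_c)

lemma has_fps_expansion_cos_omega_c: "cos_omega_c m has_fps_expansion fps_cos_omega m"
  unfolding fps_cos_omega_def cos_omega_c_def[abs_def]
  by (intro fps_expansion_intros has_fps_expansion_cos_omega_shift_c has_fps_expansion_sin_omega_shift_c)

lemma has_fps_expansion_inv_sqrt_c: "inv_sqrt_c m has_fps_expansion fps_inv_sqrt m"
proof -
  have radicand: "radicand_c m has_fps_expansion fps_radicand m"
    unfolding fps_radicand_def radicand_c_def[abs_def]
    by (intro fps_expansion_intros has_fps_expansion_cos_omega_c)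
  have "((\<lambda>x. (1+x) powr (-1/2)) \<circ> radicand_c m) has_fps_expansion fps_inv_sqrt m"
    unfolding fps_inv_sqrt_def
    by (intro has_fps_expansion_compose radicand has_fps_expansion_binomial_complex) (simp add: fps_radicand_nth)
  then show ?thesis by (simp add: o_def inv_sqrt_c_def[abs_def])
qed

lemma has_fps_expansion_Arctan: "Arctan has_fps_expansion fps_arctan"
proof (rule has_fps_expansionI)
  have "eventually (\<lambda>z::complex. z \<in> ball 0 1) (nhds 0)"
    by (intro eventually_nhds_in_open) auto
  then show "eventually (\<lambda>u. (\<lambda>n. fps_nth fps_arctan n * u ^ n) sums Arctan u) (nhds 0)"
    by eventually_elim (use Arctan_series(1) in \<open>auto simp: fps_arctan_def\<close>)
qed

lemma has_fps_expansion_theta_c: "theta_c m has_fps_expansion fps_theta m"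
proof -
  let ?arg = "\<lambda>z. inverse (complex_of_real m) * (z * (sin_omega_c m z * inv_sqrt_c m z))"
  have arg: "?arg has_fps_expansion fps_arctan_arg m"
    unfolding fps_arctan_arg_def
    by (intro fps_expansion_intros has_fps_expansion_sin_omega_c has_fps_expansion_inv_sqrt_c)
  have "(Arctan \<circ> ?arg) has_fps_expansion fps_theta m"
    unfolding fps_theta_def
    by (intro has_fps_expansion_compose arg has_fps_expansion_Arctan) (simp add: fps_arctan_arg_nth)
  then show ?thesis by (simp add: o_def theta_c_def[abs_def])
qed

lemma mult_powr_half_eq_sqrt:
  fixes m a :: real
  assumes "m > 0" "a \<ge> 0"
  shows "m * (1 + a / m^2) powr (1/2) = sqrt (m^2 + a)"
proof -
  have "m * (1 + a / m^2) powr (1/2) = sqrt (m^2 * (1 + a/m^2))"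
    using assms by (simp add: powr_half_sqrt real_sqrt_mult)
  also have "m^2 * (1 + a/m^2) = m^2 + a" using assms by (simp add: field_simps)
  finally show ?thesis .
qed

lemma one_plus_of_real_powr:
  assumes "b \<ge> 0" "c \<in> \<real>"
  shows "(1 + complex_of_real b) powr c = complex_of_real ((1 + b) powr (Re c))"
proof -
  have "c = complex_of_real (Re c)" using assms(2) by (simp add: complex_is_Real_iff complex_eq_iff)
  then show ?thesis using assms(1) by (metis powr_of_real of_real_1 of_real_add add_nonneg_nonneg zero_le_one)
qed

lemma theta_c_of_real:
  assumes m: "m > 0" shows "theta_c m (complex_of_real x) = complex_of_real (theta x m)"
proof -
  define w where "w = omega x m"
  have ratio: "inv_sq m * (complex_of_real x)^2 = complex_of_real (x^2/m^2)"
    by (simp add: inv_sq_def field_simps)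
  have "omega_c m (complex_of_real x) = complex_of_real (m * (1 + x^2/m^2) powr (1/2))"
    unfolding omega_c_def ratio by (subst one_plus_of_real_powr) auto
  also have "m * (1 + x^2/m^2) powr (1/2) = w"
    unfolding w_def omega_def using m by (simp add: mult_powr_half_eq_sqrt)
  finally have shift: "omega_shift_c m (complex_of_real x) = complex_of_real (w - m)"
    by (simp add: omega_shift_c_def)
  have sin_w: "sin_omega_c m (complex_of_real x) = complex_of_real (sin w)"
    using sin_add[of m "w - m"] by (simp add: sin_omega_c_def shift sin_of_real cos_of_real del: of_real_diff)
  have cos_w: "cos_omega_c m (complex_of_real x) = complex_of_real (cos w)"
    using cos_add[of m "w - m"]
    by (simp add: cos_omega_c_def shift sin_of_real cos_of_real del: of_real_diff)
      (simp only: of_real_diff of_real_mult)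
  define a where "a = x^2 * (cos w)^2"
  have a0: "a \<ge> 0" by (simp add: a_def)
  have radicand: "radicand_c m (complex_of_real x) = complex_of_real (a / m^2)"
    by (simp add: radicand_c_def cos_w inv_sq_def a_def field_simps power2_eq_square)
  have "inv_sqrt_c m (complex_of_real x) = complex_of_real ((1 + a/m^2) powr (-1/2))"
    unfolding inv_sqrt_c_def radicand using a0 m by (subst one_plus_of_real_powr) auto
  also have "(1 + a/m^2) powr (-1/2) = inverse ((1 + a/m^2) powr (1/2))"
    by (simp add: powr_minus[symmetric])
  also have "(1 + a/m^2) powr (1/2) = sqrt (m^2 + a) / m"
    using mult_powr_half_eq_sqrt[OF m a0] m by (simp add: field_simps)
  finally have "theta_c m (complex_of_real x) = Arctan (complex_of_real (x * sin w / sqrt (m^2 + a)))"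
    unfolding theta_c_def sin_w using m by (simp add: field_simps)
  also have "\<dots> = complex_of_real (theta x m)"
    unfolding Arctan_of_real theta_def w_def a_def ..
  finally show ?thesis .
qed

lemma higher_deriv_of_real_restriction:
  fixes G :: "complex \<Rightarrow> complex" and g :: "real \<Rightarrow> real"
  assumes hol: "G holomorphic_on ball 0 r"
    and restr: "\<And>x. \<bar>x\<bar> < r \<Longrightarrow> G (of_real x) = of_real (g x)"
    and x: "\<bar>x\<bar> < r"
  shows "(deriv ^^ n) G (of_real x) = of_real ((deriv ^^ n) g x)"
  using x
proof (induction n arbitrary: x)
  case 0
  then show ?case using restr by simp
next
  case (Suc n)
  define H where "H = (deriv ^^ n) G"
  define h where "h = (deriv ^^ n) g"
  define H' where "H' = deriv H (of_real x)"
  have "H holomorphic_on ball 0 r" unfolding H_def by (intro holomorphic_higher_deriv hol) auto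
  then have "(H has_field_derivative H') (at (of_real x))"
    unfolding H'_def by (rule holomorphic_derivI) (use Suc.prems in auto)
  then have "((\<lambda>t. H (of_real t)) has_vector_derivative H') (at x)"
    by (rule has_vector_derivative_real_field)
  then have complex_deriv: "((\<lambda>t. complex_of_real (h t)) has_vector_derivative H') (at x)"
  proof (rule has_vector_derivative_transform_within_open[of _ _ _ "{t. \<bar>t\<bar> < r}"])
    show "open {t::real. \<bar>t\<bar> < r}" by (simp add: open_Collect_less continuous_intros)
    show "\<And>y. y \<in> {t. \<bar>t\<bar> < r} \<Longrightarrow> H (complex_of_real y) = complex_of_real (h y)"
      using Suc.IH unfolding H_def h_def by auto
  qed (use Suc.prems in simp)
  have real_deriv: "(h has_real_derivative Re H') (at x)"
    using has_field_derivative_Re[OF complex_deriv] by simp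
  have "H' = complex_of_real (Re H')"
    using vector_derivative_unique_at[OF complex_deriv has_vector_derivative_of_real[OF real_deriv]] .
  moreover have "deriv h x = Re H'" using real_deriv by (rule DERIV_imp_deriv)
  ultimately show ?case unfolding H'_def H_def h_def by simp
qed

lemma dtheta0_eq_fps_theta_nth:
  assumes m: "m > 0" shows "complex_of_real (dtheta0 n m) = fact n * fps_nth (fps_theta m) n"
proof -
  obtain s where s: "open s" "0 \<in> s" "theta_c m holomorphic_on s"
    using has_fps_expansion_imp_holomorphic[OF has_fps_expansion_theta_c] by metis
  then obtain r where r: "r > 0" "ball 0 r \<subseteq> s" using open_contains_ball by blast
  have "theta_c m holomorphic_on ball 0 r" using s(3) r(2) by (rule holomorphic_on_subset)
  then have "(deriv ^^ n) (theta_c m) (of_real 0) = of_real ((deriv ^^ n) (\<lambda>x. theta x m) 0)"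
    by (rule higher_deriv_of_real_restriction) (use theta_c_of_real[OF m] r in auto)
  moreover have "fps_nth (fps_theta m) n = (deriv ^^ n) (theta_c m) 0 / fact n"
    by (rule fps_nth_fps_expansion[OF has_fps_expansion_theta_c])
  ultimately show ?thesis by (simp add: dtheta0_def)
qed

lemma dtheta0_3_eq: "m > 0 \<Longrightarrow> dtheta0 3 m = dtheta3_closed m"
  using dtheta0_eq_fps_theta_nth[of m 3] fps_theta_nth_3[of m] by (metis of_real_eq_iff less_irrefl)

lemma dtheta0_5_eq: "m > 0 \<Longrightarrow> dtheta0 5 m = dtheta5_closed m"
  using dtheta0_eq_fps_theta_nth[of m 5] fps_theta_nth_5[of m] by (metis of_real_eq_iff less_irrefl)

section \<open>The zeros of \<open>\<partial>\<^sub>\<xi>\<^sup>3\<theta>(0;m)\<close>\<close>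

definition theta3_numer :: "real \<Rightarrow> real" where
  "theta3_numer m = 3*m*cos m - sin m * (2 + (cos m)^2)"

lemma dtheta3_closed_eq_numer: "m > 0 \<Longrightarrow> dtheta3_closed m = theta3_numer m / m^3"
proof -
  assume m: "m > 0"
  have "(sin m)^3 = sin m * (1 - (cos m)^2)"
    using sin_cos_squared_add[of m] by algebra
  then have "3*m*cos m - 3 * sin m*(cos m)^2 - 2 * (sin m)^3 = theta3_numer m"
    unfolding theta3_numer_def by (simp add: algebra_simps)
  moreover have "dtheta3_closed m = (3*m*cos m - 3 * sin m*(cos m)^2 - 2 * (sin m)^3) / m^3"
    using m unfolding dtheta3_closed_def by (simp add: field_simps power2_eq_square power3_eq_cube)
  ultimately show ?thesis by simp
qed

lemma Sigma_set_eq: "Sigma_set = {m. 0 < m \<and> theta3_numer m = 0}"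
  unfolding Sigma_set_def by (auto simp: dtheta0_3_eq dtheta3_closed_eq_numer)

lemma has_real_derivative_theta3_numer:
  "(theta3_numer has_real_derivative 3 * sin m * (sin m * cos m - m)) (at m)"
proof -
  have "(theta3_numer has_real_derivative
      (3 * cos m + 3 * m * (- sin m) - (cos m * (2 + (cos m)^2) + sin m * (2 * cos m * (- sin m))))) (at m)"
    unfolding theta3_numer_def[abs_def]
    by (auto intro!: derivative_eq_intros simp: power2_eq_square algebra_simps)
  moreover have "3 * cos m + 3 * m * (- sin m) - (cos m * (2 + (cos m)^2) + sin m * (2 * cos m * (- sin m)))
      = 3 * sin m * (sin m * cos m - m)"
    using sin_cos_squared_add[of m] by algebra
  ultimately show ?thesis by simp
qed

lemma sin_mult_cos_less: "m > 0 \<Longrightarrow> sin m * cos m < (m::real)"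
proof (cases "m \<le> 1/2")
  case True
  assume m: "m > 0"
  have "m < pi" using True pi_gt3 by linarith
  then have "sin m > 0" "cos m < 1"
    using m sin_gt_zero cos_monotone_0_pi[of 0 m] by auto
  then have "sin m * cos m < sin m" by simp
  also have "sin m \<le> m" using m by (simp add: sin_x_le_x)
  finally show ?thesis .
next
  case False
  have "sin m * cos m = sin (2*m) / 2" by (simp add: sin_double)
  also have "\<dots> \<le> 1/2" by simp
  finally show ?thesis using False by simp
qed

lemma neg_one_power_mult_sin_pos:
  assumes "real n * pi < x" "x < (real n + 1) * pi"
  shows "(-1)^n * sin x > 0"
proof -
  have "sin (x - real n * pi) = (-1)^n * sin x" by (simp add: sin_diff)
  moreover have "sin (x - real n * pi) > 0" by (rule sin_gt_zero) (use assms in \<open>auto simp: algebra_simps\<close>)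
  ultimately show ?thesis by simp
qed

lemma neg_one_power_mult_theta3_numer_decreasing:
  assumes "real n * pi \<le> a" "a < b" "b \<le> (real n + 1) * pi" "0 \<le> a"
  shows "(-1)^n * theta3_numer b < (-1)^n * theta3_numer a"
proof (rule DERIV_neg_imp_decreasing_open[OF assms(2)])
  fix x assume x: "a < x" "x < b"
  have "((\<lambda>x. (-1)^n * theta3_numer x) has_real_derivative
      ((-1)^n * sin x) * (3 * (sin x * cos x - x))) (at x)"
    using DERIV_cmult[OF has_real_derivative_theta3_numer, of "(-1)^n"] by (simp add: algebra_simps)
  moreover have "((-1)^n * sin x) * (3 * (sin x * cos x - x)) < 0"
  proof (rule mult_pos_neg)
    show "(-1)^n * sin x > 0" by (rule neg_one_power_mult_sin_pos) (use x assms in auto)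
    show "3 * (sin x * cos x - x) < 0" using sin_mult_cos_less[of x] x assms by simp
  qed
  ultimately show "\<exists>y. ((\<lambda>x. (-1)^n * theta3_numer x) has_real_derivative y) (at x) \<and> y < 0"
    by blast
next
  show "continuous_on {a..b} (\<lambda>x. (-1)^n * theta3_numer x)"
    unfolding theta3_numer_def by (intro continuous_intros)
qed

lemma theta3_numer_multiple_pi: "theta3_numer (real n * pi) = 3 * real n * pi * (-1)^n"
  by (simp add: theta3_numer_def power_mult_distrib[symmetric] flip: power_mult)

lemma theta3_numer_neg: "0 < m \<Longrightarrow> m \<le> pi \<Longrightarrow> theta3_numer m < 0"
  using neg_one_power_mult_theta3_numer_decreasing[of 0 0 m] by (simp add: theta3_numer_def)

lemma theta3_numer_unique_zero:
  assumes k: "k \<ge> 1"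
  shows "\<exists>!m. real k * pi < m \<and> m < (real k + 1) * pi \<and> theta3_numer m = 0"
proof -
  define f where "f x = (-1)^k * theta3_numer x" for x
  have f_left: "f (real k * pi) > 0"
    using k by (simp add: f_def theta3_numer_multiple_pi mult.assoc[symmetric] flip: power_add)
  have right: "theta3_numer ((real k + 1) * pi) = 3 * (real k + 1) * pi * (-1)^(Suc k)"
    using theta3_numer_multiple_pi[of "Suc k"] by (simp add: add.commute)
  have "(-1::real)^k * (-1)^(Suc k) = -1" by (simp flip: power_add)
  then have "f ((real k + 1) * pi) = - (3 * (real k + 1) * pi)"
    unfolding f_def right by (simp add: algebra_simps)
  moreover have "0 < 3 * (real k + 1) * pi" by simp
  ultimately have f_right: "f ((real k + 1) * pi) < 0"
    by linarith
  have "continuous_on {real k * pi .. (real k + 1) * pi} f"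
    unfolding f_def theta3_numer_def by (intro continuous_intros)
  then obtain x where x: "real k * pi \<le> x" "x \<le> (real k + 1) * pi" "f x = 0"
    using IVT2'[of f "(real k + 1) * pi" 0 "real k * pi"] f_left f_right by (auto simp: algebra_simps)
  then have x_zero: "real k * pi < x \<and> x < (real k + 1) * pi \<and> theta3_numer x = 0"
    using f_left f_right by (auto simp: f_def order.order_iff_strict)
  have "y = x" if y: "real k * pi < y" "y < (real k + 1) * pi" "theta3_numer y = 0" for y
  proof -
    have "0 \<le> real k * pi" by simp
    then have "0 \<le> x" "0 \<le> y" using x_zero y by linarith+
    then show ?thesis
      using neg_one_power_mult_theta3_numer_decreasing[of k y x]
        neg_one_power_mult_theta3_numer_decreasing[of k x y] y x_zero
      by (cases y x rule: linorder_cases) (auto simp: less_imp_le)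
  qed
  then show ?thesis using x_zero by blast
qed

text \<open>The junk value \<open>sigma_root 0 = 0\<close> keeps \<open>sigma_root\<close> strictly monotone on all of \<open>nat\<close>.\<close>

definition sigma_root :: "nat \<Rightarrow> real" where
  "sigma_root k = (if k = 0 then 0
     else THE m. real k * pi < m \<and> m < (real k + 1) * pi \<and> theta3_numer m = 0)"

lemma sigma_root_spec:
  assumes "k \<ge> 1"
  shows "real k * pi < sigma_root k" "sigma_root k < (real k + 1) * pi" "theta3_numer (sigma_root k) = 0"
  using theI'[OF theta3_numer_unique_zero[OF assms]] assms by (auto simp: sigma_root_def)

lemma sigma_root_unique:
  assumes "k \<ge> 1" "real k * pi < m" "m < (real k + 1) * pi" "theta3_numer m = 0"
  shows "m = sigma_root k"
  using theta3_numer_unique_zero[OF assms(1)] sigma_root_spec[OF assms(1)] assms(2-) by blast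

lemma sigma_root_lower:
  assumes "k \<ge> 1" shows "pi < sigma_root k" "real k \<le> sigma_root k"
proof -
  have "pi \<le> real k * pi" "real k \<le> real k * pi" using assms pi_gt3 by simp_all
  then show "pi < sigma_root k" "real k \<le> sigma_root k" using sigma_root_spec(1)[OF assms] by linarith+
qed

lemma mem_Sigma_set_iff: "m \<in> Sigma_set \<longleftrightarrow> (\<exists>k\<ge>1. m = sigma_root k)"
proof
  assume "\<exists>k\<ge>1. m = sigma_root k"
  then show "m \<in> Sigma_set"
    using sigma_root_spec sigma_root_lower pi_gt_zero by (force simp: Sigma_set_eq)
next
  assume "m \<in> Sigma_set"
  then have m: "m > 0" "theta3_numer m = 0" by (auto simp: Sigma_set_eq)
  define k where "k = nat \<lfloor>m / pi\<rfloor>"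
  have "real k = of_int \<lfloor>m / pi\<rfloor>" unfolding k_def using m by simp
  then have "real k \<le> m / pi" "m / pi < real k + 1" by linarith+
  then have lo: "real k * pi \<le> m" and hi: "m < (real k + 1) * pi" by (simp_all add: field_simps)
  have k: "k \<ge> 1"
    using theta3_numer_neg[of m] hi m by (cases k) auto
  have "m \<noteq> real k * pi"
    using m(2) k theta3_numer_multiple_pi[of k] by auto
  then show "\<exists>k\<ge>1. m = sigma_root k" using k lo hi m sigma_root_unique by force
qed

lemma strict_mono_sigma_root: "strict_mono sigma_root"
  unfolding strict_mono_Suc_iff
proof
  fix n
  show "sigma_root n < sigma_root (Suc n)"
  proof (cases "n = 0")
    case True
    have "0 < sigma_root 1" using sigma_root_lower(1)[of 1] pi_gt_zero by linarith
    then show ?thesis using True by (simp add: sigma_root_def[of 0])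
  next
    case False
    then have "sigma_root n < real (Suc n) * pi" using sigma_root_spec(2)[of n] by (simp add: add.commute)
    also have "\<dots> < sigma_root (Suc n)" using sigma_root_spec(1)[of "Suc n"] by simp
    finally show ?thesis .
  qed
qed

lemma Sigma_set_eq_image: "Sigma_set = sigma_root ` {1..}"
  using mem_Sigma_set_iff by (auto simp: image_iff)

lemma Sigma_set_discrete: "\<forall>x\<in>Sigma_set. \<exists>e>0. Sigma_set \<inter> ball x e = {x}"
proof
  fix x assume x: "x \<in> Sigma_set"
  then obtain k where k: "k \<ge> 1" "x = sigma_root k" using mem_Sigma_set_iff by blast
  define e where "e = min (x - real k * pi) ((real k + 1) * pi - x)"
  have "e > 0" unfolding e_def using sigma_root_spec[OF k(1)] k(2) by auto
  moreover have "y = x" if "y \<in> Sigma_set" "y \<in> ball x e" for y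
  proof -
    have "real k * pi < y" "y < (real k + 1) * pi"
      using that(2) by (auto simp: e_def dist_real_def)
    then show ?thesis using that(1) sigma_root_unique[OF k(1)] k(2) by (auto simp: Sigma_set_eq)
  qed
  ultimately show "\<exists>e>0. Sigma_set \<inter> ball x e = {x}" using x by auto
qed

section \<open>Asymptotics of the zeros and of \<open>\<partial>\<^sub>\<xi>\<^sup>5\<theta>(0;m\<^sub>k)\<close>\<close>

lemma theta3_numer_zero_abs_cos_le:
  assumes "m > 0" "theta3_numer m = 0" shows "\<bar>cos m\<bar> \<le> 1 / m"
proof -
  have "3 * m * cos m = sin m * (2 + (cos m)^2)" using assms(2) by (simp add: theta3_numer_def)
  moreover have "\<bar>sin m * (2 + (cos m)^2)\<bar> \<le> 1 * 3"
    unfolding abs_mult by (intro mult_mono) (auto simp: abs_sin_le_one abs_square_le_1)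
  ultimately have "\<bar>3 * m * cos m\<bar> \<le> 3" by simp
  then have "m * \<bar>cos m\<bar> \<le> 1" using assms(1) by (simp add: abs_mult)
  then show ?thesis using assms(1) by (simp add: field_simps)
qed

lemma self_le_two_sin:
  assumes "0 \<le> t" "t \<le> pi/2" shows "t \<le> 2 * sin t"
proof (cases "t \<le> pi/3")
  case True
  have "sin 0 - 0/2 \<le> sin t - t/2"
  proof (rule DERIV_nonneg_imp_increasing_open[of 0 t])
    fix x assume x: "0 < x" "x < t"
    have "cos x > cos (pi/3)" using cos_monotone_0_pi[of x "pi/3"] x True by simp
    then show "\<exists>y. ((\<lambda>x. sin x - x/2) has_real_derivative y) (at x) \<and> y \<ge> 0"
      by (intro exI[of _ "cos x - 1/2"]) (auto intro!: derivative_eq_intros simp: cos_60)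
  qed (use assms in \<open>auto intro!: continuous_intros\<close>)
  then show ?thesis by simp
next
  case False
  have "sin t = cos (pi/2 - t)" by (simp add: cos_diff)
  also have "cos (pi/6) \<le> cos (pi/2 - t)" using False assms by (intro cos_monotone_0_pi_le) auto
  finally have "sqrt 3 / 2 \<le> sin t" by (simp add: cos_30)
  moreover have "1.6 \<le> sqrt 3" by (rule real_le_rsqrt) (simp add: power2_eq_square)
  moreover have "pi \<le> 3.2" using pi_approx by simp
  ultimately show ?thesis using assms by simp
qed

lemma abs_le_two_abs_sin: "\<bar>d\<bar> \<le> pi/2 \<Longrightarrow> \<bar>d\<bar> \<le> 2 * \<bar>sin d\<bar>"
  using self_le_two_sin[of d] self_le_two_sin[of "-d"] by (cases "d \<ge> 0") auto

lemma sigma_root_asymptotics: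
  assumes k: "k \<ge> 1" shows "\<bar>sigma_root k - (real k + 1/2) * pi\<bar> \<le> 1 / real k"
proof -
  define m where "m = sigma_root k"
  define d where "d = m - (real k + 1/2) * pi"
  have m: "real k * pi < m" "m < (real k + 1) * pi" "theta3_numer m = 0"
    using sigma_root_spec[OF k] unfolding m_def by auto
  have "\<bar>d\<bar> \<le> pi/2" using m(1,2) unfolding d_def abs_le_iff by (simp add: algebra_simps)
  then have "\<bar>d\<bar> \<le> 2 * \<bar>sin d\<bar>" by (rule abs_le_two_abs_sin)
  also have "\<bar>sin d\<bar> = \<bar>cos m\<bar>"
  proof -
    have "m = d + (real k * pi + pi/2)" unfolding d_def by (simp add: algebra_simps)
    then have "cos m = - ((-1)^k * sin d)" by (simp add: cos_add sin_add)
    then show ?thesis by (simp add: abs_mult)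
  qed
  also have "\<bar>cos m\<bar> \<le> 1 / m"
    using sigma_root_lower(1)[OF k] pi_gt_zero unfolding m_def
    by (intro theta3_numer_zero_abs_cos_le m(3)[unfolded m_def]) linarith
  also have "2 * (1 / m) \<le> 2 / (real k * pi)" using m(1) k by (simp add: frac_le)
  also have "\<dots> \<le> 1 / real k" using k pi_gt3 by (simp add: field_simps)
  finally show ?thesis unfolding d_def m_def by simp
qed

lemma abs_sin_minus_sign_le_cos_sq:
  fixes \<sigma> x :: real
  assumes "\<sigma>^2 = 1" "\<sigma> * sin x \<ge> 0" shows "\<bar>sin x - \<sigma>\<bar> \<le> (cos x)^2"
proof -
  have abs_\<sigma>: "\<bar>\<sigma>\<bar> = 1" using assms(1) by (auto simp: power2_eq_1_iff)
  have "\<sigma> * sin x \<le> \<bar>\<sigma> * sin x\<bar>" by simp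
  also have "\<dots> = \<bar>sin x\<bar>" using abs_\<sigma> by (simp add: abs_mult)
  also have "\<dots> \<le> 1" by (rule abs_sin_le_one)
  finally have le1: "\<sigma> * sin x \<le> 1" .
  have "\<sigma> * (\<sigma> * sin x - 1) = \<sigma>^2 * sin x - \<sigma>" by (simp add: algebra_simps power2_eq_square)
  then have "\<bar>sin x - \<sigma>\<bar> = \<bar>\<sigma> * (\<sigma> * sin x - 1)\<bar>" using assms(1) by simp
  also have "\<dots> = 1 - \<sigma> * sin x" using abs_\<sigma> le1 by (simp add: abs_mult)
  also have "\<dots> \<le> 1 - (\<sigma> * sin x)^2" using assms(2) le1 by (simp add: power2_eq_square mult_left_le)
  also have "\<dots> = (cos x)^2" using assms(1) by (simp add: power_mult_distrib sin_squared_eq)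
  finally show ?thesis .
qed

lemma cube_mult_dtheta5_closed:
  fixes m :: real
  assumes "m \<noteq> 0"
  shows "m^3 * dtheta5_closed m = -15 * sin m + (-15 * cos m - 30 * (cos m)^3) / m
    + (45 * sin m * (cos m)^4 + 60 * (sin m)^3 * (cos m)^2 + 24 * (sin m)^5) / m^2"
  using assms unfolding dtheta5_closed_def by (simp add: field_simps eval_nat_numeral)

lemma sigma_root_cube_dtheta5_asymptotics:
  assumes k: "k \<ge> 1"
  shows "\<bar>(sigma_root k)^3 * dtheta0 5 (sigma_root k) - (-1)^(k+1) * 15\<bar> \<le> 189 / (real k)^2"
proof -
  define m where "m = sigma_root k"
  define s where "s = sin m"
  define c where "c = cos m"
  have m_pos: "m > 0" and k_le_m: "real k \<le> m"
    using sigma_root_lower[OF k] pi_gt_zero unfolding m_def by linarith+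
  have sc: "\<bar>s\<bar> \<le> 1" "\<bar>c\<bar> \<le> 1" unfolding s_def c_def by (simp_all add: abs_sin_le_one abs_cos_le_one)
  have c_le: "\<bar>c\<bar> \<le> 1 / m"
    using theta3_numer_zero_abs_cos_le[OF m_pos] sigma_root_spec(3)[OF k] unfolding c_def m_def by simp
  have c2_le: "c^2 \<le> 1 / m^2"
    using power_mono[OF c_le, of 2] by (simp add: power_divide)
  have sign: "(-1)^k * s \<ge> 0"
    using neg_one_power_mult_sin_pos sigma_root_spec[OF k] unfolding s_def m_def by (simp add: less_imp_le)
  have E1: "\<bar>-15 * s - (-1)^(k+1) * 15\<bar> \<le> 15 / m^2"
  proof -
    have "-15 * s - (-1)^(k+1) * 15 = -15 * (s - (-1)^k)" by simp
    then have "\<bar>-15 * s - (-1)^(k+1) * 15\<bar> = 15 * \<bar>s - (-1)^k\<bar>" by (simp only: abs_mult)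
    also have "\<bar>s - (-1)^k\<bar> \<le> c^2"
      using abs_sin_minus_sign_le_cos_sq[of "(-1)^k" m] sign unfolding s_def c_def by (simp flip: power_mult)
    finally show ?thesis using c2_le by simp
  qed
  have E2: "\<bar>(-15 * c - 30 * c^3) / m\<bar> \<le> 45 / m^2"
  proof -
    have "\<bar>c\<bar>^3 = \<bar>c\<bar> * \<bar>c\<bar>^2" by (simp add: power3_eq_cube power2_eq_square)
    also have "\<dots> \<le> \<bar>c\<bar>" using sc(2) by (simp add: mult_left_le abs_square_le_1)
    finally have "\<bar>c\<bar>^3 \<le> \<bar>c\<bar>" .
    moreover have "\<bar>-15 * c - 30 * c^3\<bar> \<le> 15 * \<bar>c\<bar> + 30 * \<bar>c\<bar>^3"
      using abs_triangle_ineq4[of "-15 * c" "30 * c^3"] by (simp add: abs_mult power_abs)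
    ultimately have "\<bar>-15 * c - 30 * c^3\<bar> \<le> 45 * \<bar>c\<bar>" by linarith
    also have "\<dots> \<le> 45 / m" using c_le by simp
    finally show ?thesis using m_pos by (simp add: abs_divide power2_eq_square divide_right_mono field_simps)
  qed
  have E3: "\<bar>(45 * s * c^4 + 60 * s^3 * c^2 + 24 * s^5) / m^2\<bar> \<le> 129 / m^2"
  proof -
    have "\<bar>s^i * c^j\<bar> \<le> 1" for i j :: nat using sc by (simp add: abs_mult power_abs mult_le_one power_le_one)
    from this[of 1 4] this[of 3 2] this[of 5 0]
    have "45 * \<bar>s^1 * c^4\<bar> + 60 * \<bar>s^3 * c^2\<bar> + 24 * \<bar>s^5 * c^0\<bar> \<le> 129" by linarith
    moreover have "\<bar>45 * s * c^4 + 60 * s^3 * c^2 + 24 * s^5\<bar>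
        \<le> 45 * \<bar>s^1 * c^4\<bar> + 60 * \<bar>s^3 * c^2\<bar> + 24 * \<bar>s^5 * c^0\<bar>"
      using abs_triangle_ineq[of "45 * s * c^4 + 60 * s^3 * c^2" "24 * s^5"]
        abs_triangle_ineq[of "45 * s * c^4" "60 * s^3 * c^2"]
      by (simp add: abs_mult)
    ultimately have "\<bar>45 * s * c^4 + 60 * s^3 * c^2 + 24 * s^5\<bar> \<le> 129" by linarith
    then show ?thesis using m_pos by (simp add: abs_divide divide_right_mono)
  qed
  define X where "X = -15 * s - (-1)^(k+1) * 15"
  define Y where "Y = (-15 * c - 30 * c^3) / m"
  define Z where "Z = (45 * s * c^4 + 60 * s^3 * c^2 + 24 * s^5) / m^2"
  have "m^3 * dtheta0 5 m - (-1)^(k+1) * 15 = X + Y + Z"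
    using m_pos by (simp add: dtheta0_5_eq cube_mult_dtheta5_closed X_def Y_def Z_def s_def c_def)
  then have "\<bar>m^3 * dtheta0 5 m - (-1)^(k+1) * 15\<bar> \<le> \<bar>X\<bar> + \<bar>Y\<bar> + \<bar>Z\<bar>"
    using abs_triangle_ineq[of "X + Y" Z] abs_triangle_ineq[of X Y] by linarith
  also have "\<dots> \<le> 15 / m^2 + 45 / m^2 + 129 / m^2"
    using E1 E2 E3 unfolding X_def Y_def Z_def by linarith
  also have "\<dots> \<le> 189 / (real k)^2" using k_le_m k by (simp add: frac_le power_mono)
  finally show ?thesis unfolding m_def .
qed

lemma sigma_root_dtheta5_nonzero:
  assumes "k \<ge> 4" shows "dtheta0 5 (sigma_root k) \<noteq> 0"
proof -
  have "189 / (real k)^2 \<le> 189 / 4^2" using assms by (intro divide_left_mono power_mono) auto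
  then have "\<bar>(sigma_root k)^3 * dtheta0 5 (sigma_root k) - (-1)^(k+1) * 15\<bar> < 15"
    using sigma_root_cube_dtheta5_asymptotics[of k] assms by simp
  then show ?thesis by (auto simp: abs_mult)
qed

theorem lemma5p2:
  shows "(\<forall>x\<in>Sigma_set. \<exists>e>0. Sigma_set \<inter> ball x e = {x}) \<and>
    (\<exists>mk :: nat \<Rightarrow> real. strict_mono mk \<and> Sigma_set = mk ` {1..} \<and>
      (\<exists>(K::nat) (k0::int). K > 0 \<and>
         (\<exists>C. \<forall>k\<ge>K. \<bar>mk k - (real k + of_int k0 + 1/2) * pi\<bar> \<le> C / real k) \<and>
         (\<exists>C. \<forall>k\<ge>K. \<bar>(mk k)^3 * dtheta0 5 (mk k) - (-1) powi (int k + k0 + 1) * 15\<bar>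
                 \<le> C / (real k)^2)) \<and>
      (\<exists>N. \<forall>k\<ge>N. dtheta0 5 (mk k) \<noteq> 0))"
proof -
  have sign: "(-1::real) powi (int k + 0 + 1) = (-1)^(k+1)" for k :: nat
    using power_int_of_nat[of "-1::real" "k+1"] by (simp add: add.commute)
  have "\<forall>k\<ge>1. \<bar>sigma_root k - (real k + of_int 0 + 1/2) * pi\<bar> \<le> 1 / real k"
    using sigma_root_asymptotics by simp
  moreover have "\<forall>k\<ge>1. \<bar>(sigma_root k)^3 * dtheta0 5 (sigma_root k) - (-1) powi (int k + 0 + 1) * 15\<bar>
      \<le> 189 / (real k)^2"
    unfolding sign using sigma_root_cube_dtheta5_asymptotics by blast
  ultimately have "\<exists>(K::nat) (k0::int). K > 0 \<and>
      (\<exists>C. \<forall>k\<ge>K. \<bar>sigma_root k - (real k + of_int k0 + 1/2) * pi\<bar> \<le> C / real k) \<and>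
      (\<exists>C. \<forall>k\<ge>K. \<bar>(sigma_root k)^3 * dtheta0 5 (sigma_root k) - (-1) powi (int k + k0 + 1) * 15\<bar>
              \<le> C / (real k)^2)"
    by (intro exI[of _ "1::nat"] exI[of _ "0::int"]) blast
  then show ?thesis
    using Sigma_set_discrete strict_mono_sigma_root Sigma_set_eq_image sigma_root_dtheta5_nonzero
    by blast
qed

end
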